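(* Let $g\ge2$ and $n\ge2$. Then $P_{g,n}(a_1,\dots,a_n)$ is divisible by $\prod_{i=1}^n a_i$ in the polynomial ring $\mathbb{Q}[a_1,\dots,a_n]$, and $\tilde P(a_1,\dots,a_n):=P_{g,n}(a_1,\dots,a_n)/\prod_{i=1}^na_i$ is a polynomial of degree (at most) $2g-4+n$.
   Context: For $g\ge2$, $n\ge1$, $$P_{g,n}(a_1,\dots,a_n):=\sum_{k=1}^n\frac{(-1)^k(2g-3+k)!}{k!}\sum_{(I_1,\dots,I_k)}\ \sum_{\substack{d_1,\dots,d_k\in\mathbb{Z}_{\ge0}\\ d_1+\cdots+d_k=g-2+n}}\prod_{j=1}^k\binom{2a_{[I_j]}+1}{2d_j}\prod_{i=1}^{|I_j|-1}(2d_j+1-2i),$$ where $(I_1,\dots,I_k)$ runs over ordered $k$-tuples of nonempty pairwise disjoint subsets of $\{1,\dots,n\}$ with union $\{1,\dots,n\}$, $a_{[I]}:=\sum_{\ell\in I}a_\ell$, and $\binom{x}{m}:=x(x-1)\cdots(x-m+1)/m!$ for $m\ge0$, a polynomial in $x$ of degree $m$. *)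

theory Defs
  imports Complex_Main
begin

text \<open>Ordered k-tuples (I_1,...,I_k) of nonempty pairwise disjoint subsets of {1..n}
  with union {1..n}, represented as lists of length k (I_j = Is ! (j-1)).\<close>
definition ordered_set_partitions :: "nat \<Rightarrow> nat \<Rightarrow> nat set list set" where
  "ordered_set_partitions n k =
     {Is. length Is = k \<and> (\<forall>I\<in>set Is. I \<noteq> {}) \<and>
          (\<forall>i<k. \<forall>j<k. i \<noteq> j \<longrightarrow> Is ! i \<inter> Is ! j = {}) \<and>
          \<Union>(set Is) = {1..n}}"

definition compositions :: "nat \<Rightarrow> nat \<Rightarrow> nat list set" where
  "compositions k s = {ds. length ds = k \<and> sum_list ds = s}"

definition Pgn :: "nat \<Rightarrow> nat \<Rightarrow> (nat \<Rightarrow> rat) \<Rightarrow> rat" where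
  "Pgn g n a =
    (\<Sum>k=1..n. (-1) ^ k * fact (2 * g - 3 + k) / fact k *
       (\<Sum>Is\<in>ordered_set_partitions n k.
          \<Sum>ds\<in>compositions k (g - 2 + n).
            \<Prod>j<k. ((2 * (\<Sum>l\<in>Is ! j. a l) + 1) gchoose (2 * ds ! j)) *
                   (\<Prod>i=1..card (Is ! j) - 1.
                       (2 * of_nat (ds ! j) + 1 - 2 * of_nat i :: rat))))"

text \<open>Q is (the evaluation function of) a polynomial in Q[a_1,...,a_n] of total
  degree at most D: a finite Q-linear combination of monomials in a_1..a_n
  of total degree at most D.\<close>
definition is_poly_deg_le :: "nat \<Rightarrow> nat \<Rightarrow> ((nat \<Rightarrow> rat) \<Rightarrow> rat) \<Rightarrow> bool" where
  "is_poly_deg_le n D Q \<longleftrightarrow>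
    (\<exists>M c. finite M \<and>
       (\<forall>m\<in>M. (\<forall>i. m i \<noteq> 0 \<longrightarrow> i \<in> {1..n}) \<and> (\<Sum>i=1..n. m i) \<le> D) \<and>
       (\<forall>a. Q a = (\<Sum>m\<in>M. c m * (\<Prod>i=1..n. a i ^ m i))))"

end

theory Submission
  imports Defs "HOL-Library.Disjoint_Sets"
begin

text \<open>\<open>P\<^sub>g\<^sub>,\<^sub>n\<close> is a sum of products of binomial coefficients of total degree \<open>2(g - 2 + n)\<close>
  in the \<open>a\<^sub>i\<close>, so it suffices to show that it vanishes on every coordinate hyperplane
  \<open>a\<^sub>p = 0\<close>: a polynomial with this property is divisible by \<open>a\<^sub>1 \<cdots> a\<^sub>n\<close>, and the
  quotient has degree \<open>2g - 4 + n\<close>.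

  So let \<open>a\<^sub>p = 0\<close>, put \<open>U = {1..n} - {p}\<close>, and let \<open>T\<^sub>k\<close> be the inner sum taken over the
  ordered partitions of \<open>U\<close> into \<open>k\<close> blocks. An ordered partition of \<open>{1..n}\<close> either has
  \<open>{p}\<close> as a block, whose factor \<open>binom(1, 2d)\<close> forces \<open>d = 0\<close>, or arises from a partition
  of \<open>U\<close> by adding \<open>p\<close> to a block \<open>I\<^sub>j\<close>, which multiplies the term by
  \<open>2d\<^sub>j + 1 - 2|I\<^sub>j|\<close>; summed over \<open>j\<close> these factors give \<open>2g - 2 + k\<close>. Hence the \<open>k\<close>-th
  inner sum is \<open>k T\<^sub>k\<^sub>-\<^sub>1 + (2g - 2 + k) T\<^sub>k\<close>, and against the coefficients
  \<open>(-1)\<^sup>k (2g - 3 + k)!/k!\<close> the sum over \<open>k\<close> telescopes to boundary terms, which vanish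
  because \<open>T\<^sub>0 = T\<^sub>n = 0\<close>.\<close>

section \<open>Polynomial functions of bounded degree\<close>

definition monomial :: "nat \<Rightarrow> (nat \<Rightarrow> nat) \<Rightarrow> (nat \<Rightarrow> rat) \<Rightarrow> rat" where
  "monomial n m a = (\<Prod>i=1..n. a i ^ m i)"

lemma is_poly_deg_le_iff:
  "is_poly_deg_le n D Q \<longleftrightarrow>
    (\<exists>M c. finite M \<and>
       (\<forall>m\<in>M. (\<forall>i. m i \<noteq> 0 \<longrightarrow> i \<in> {1..n}) \<and> (\<Sum>i=1..n. m i) \<le> D) \<and>
       (\<forall>a. Q a = (\<Sum>m\<in>M. c m * monomial n m a)))"
  unfolding is_poly_deg_le_def monomial_def by simp

lemma monomial_add: "monomial n (\<lambda>i. m1 i + m2 i) a = monomial n m1 a * monomial n m2 a"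
  unfolding monomial_def by (simp add: power_add prod.distrib)

lemma is_poly_deg_le_const: "is_poly_deg_le n D (\<lambda>a. r)"
  unfolding is_poly_deg_le_iff
  by (intro exI[of _ "{\<lambda>_. 0}"] exI[of _ "\<lambda>_. r"]) (simp add: monomial_def)

lemma is_poly_deg_le_var:
  assumes "l \<in> {1..n}" "1 \<le> D"
  shows "is_poly_deg_le n D (\<lambda>a. a l)"
proof -
  define m where "m i = (if i = l then 1 else 0 :: nat)" for i
  have "monomial n m a = a l" for a
    using assms unfolding monomial_def m_def by (simp add: if_distrib prod.delta cong: if_cong)
  moreover have "(\<Sum>i=1..n. m i) = 1"
    using assms unfolding m_def by simp
  ultimately show ?thesis
    unfolding is_poly_deg_le_iff using assms
    by (intro exI[of _ "{m}"] exI[of _ "\<lambda>_. 1"]) (auto simp: m_def)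
qed

lemma is_poly_deg_le_add:
  assumes "is_poly_deg_le n D P" "is_poly_deg_le n D Q"
  shows "is_poly_deg_le n D (\<lambda>a. P a + Q a)"
proof -
  obtain M1 c1 where M1: "finite M1" "\<forall>m\<in>M1. (\<forall>i. m i \<noteq> 0 \<longrightarrow> i \<in> {1..n}) \<and> (\<Sum>i=1..n. m i) \<le> D"
    and P: "\<And>a. P a = (\<Sum>m\<in>M1. c1 m * monomial n m a)"
    using assms(1) unfolding is_poly_deg_le_iff by blast
  obtain M2 c2 where M2: "finite M2" "\<forall>m\<in>M2. (\<forall>i. m i \<noteq> 0 \<longrightarrow> i \<in> {1..n}) \<and> (\<Sum>i=1..n. m i) \<le> D"
    and Q: "\<And>a. Q a = (\<Sum>m\<in>M2. c2 m * monomial n m a)"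
    using assms(2) unfolding is_poly_deg_le_iff by blast
  define c where "c m = (if m \<in> M1 then c1 m else 0) + (if m \<in> M2 then c2 m else 0)" for m
  have "P a + Q a = (\<Sum>m\<in>M1 \<union> M2. c m * monomial n m a)" for a
  proof -
    have "(\<Sum>m\<in>M1 \<union> M2. c m * monomial n m a) =
        (\<Sum>m\<in>M1 \<union> M2. if m \<in> M1 then c1 m * monomial n m a else 0) +
        (\<Sum>m\<in>M1 \<union> M2. if m \<in> M2 then c2 m * monomial n m a else 0)"
      unfolding sum.distrib[symmetric] by (rule sum.cong) (auto simp: c_def algebra_simps)
    also have "\<dots> = P a + Q a"
      using M1(1) M2(1) by (simp add: P Q sum.If_cases Int_absorb1 Int_absorb2)
    finally show ?thesis ..
  qed
  with M1 M2 show ?thesis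
    unfolding is_poly_deg_le_iff by (intro exI[of _ "M1 \<union> M2"] exI[of _ c]) auto
qed

lemma is_poly_deg_le_mult:
  assumes "is_poly_deg_le n D1 P" "is_poly_deg_le n D2 Q"
  shows "is_poly_deg_le n (D1 + D2) (\<lambda>a. P a * Q a)"
proof -
  obtain M1 c1 where M1: "finite M1" "\<forall>m\<in>M1. (\<forall>i. m i \<noteq> 0 \<longrightarrow> i \<in> {1..n}) \<and> (\<Sum>i=1..n. m i) \<le> D1"
    and P: "\<And>a. P a = (\<Sum>m\<in>M1. c1 m * monomial n m a)"
    using assms(1) unfolding is_poly_deg_le_iff by blast
  obtain M2 c2 where M2: "finite M2" "\<forall>m\<in>M2. (\<forall>i. m i \<noteq> 0 \<longrightarrow> i \<in> {1..n}) \<and> (\<Sum>i=1..n. m i) \<le> D2"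
    and Q: "\<And>a. Q a = (\<Sum>m\<in>M2. c2 m * monomial n m a)"
    using assms(2) unfolding is_poly_deg_le_iff by blast
  define h where "h = (\<lambda>(m1, m2) (i::nat). m1 i + m2 i :: nat)"
  define c where "c m = (\<Sum>x\<in>{x\<in>M1 \<times> M2. h x = m}. c1 (fst x) * c2 (snd x))" for m
  have fin: "finite (M1 \<times> M2)"
    using M1(1) M2(1) by simp
  have "P a * Q a = (\<Sum>m\<in>h ` (M1 \<times> M2). c m * monomial n m a)" for a
  proof -
    have "P a * Q a = (\<Sum>x\<in>M1 \<times> M2. c1 (fst x) * c2 (snd x) * monomial n (h x) a)"
      unfolding P Q sum_product sum.cartesian_product
      by (rule sum.cong) (auto simp: h_def monomial_add)
    also have "\<dots> = (\<Sum>m\<in>h ` (M1 \<times> M2). \<Sum>x\<in>{x\<in>M1 \<times> M2. h x = m}.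
        c1 (fst x) * c2 (snd x) * monomial n (h x) a)"
      by (rule sum.image_gen[OF fin])
    also have "\<dots> = (\<Sum>m\<in>h ` (M1 \<times> M2). c m * monomial n m a)"
      unfolding c_def sum_distrib_right by (intro sum.cong refl) auto
    finally show ?thesis .
  qed
  moreover have "(\<forall>i. m i \<noteq> 0 \<longrightarrow> i \<in> {1..n}) \<and> (\<Sum>i=1..n. m i) \<le> D1 + D2"
    if "m \<in> h ` (M1 \<times> M2)" for m
    using that M1(2) M2(2) by (auto simp: h_def sum.distrib add_mono)
  ultimately show ?thesis
    unfolding is_poly_deg_le_iff using fin by (intro exI[of _ "h ` (M1 \<times> M2)"] exI[of _ c]) auto
qed

lemma is_poly_deg_le_cmult: "is_poly_deg_le n D Q \<Longrightarrow> is_poly_deg_le n D (\<lambda>a. r * Q a)"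
  using is_poly_deg_le_mult[OF is_poly_deg_le_const[of n 0 r]] by simp

lemma is_poly_deg_le_sum:
  assumes "\<And>x. x \<in> A \<Longrightarrow> is_poly_deg_le n D (Q x)"
  shows "is_poly_deg_le n D (\<lambda>a. \<Sum>x\<in>A. Q x a)"
  using assms
  by (induction A rule: infinite_finite_induct) (auto intro: is_poly_deg_le_const is_poly_deg_le_add)

lemma is_poly_deg_le_prod:
  assumes "finite A" "\<And>x. x \<in> A \<Longrightarrow> is_poly_deg_le n (D x) (Q x)"
  shows "is_poly_deg_le n (\<Sum>x\<in>A. D x) (\<lambda>a. \<Prod>x\<in>A. Q x a)"
  using assms
  by (induction A rule: finite_induct) (auto intro: is_poly_deg_le_const is_poly_deg_le_mult)

lemma is_poly_deg_le_gchoose: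
  assumes "is_poly_deg_le n 1 L"
  shows "is_poly_deg_le n m (\<lambda>a. L a gchoose m)"
proof -
  have "is_poly_deg_le n (\<Sum>i<m. 1) (\<lambda>a. \<Prod>i<m. L a + (- of_nat i))"
    by (intro is_poly_deg_le_prod is_poly_deg_le_add assms is_poly_deg_le_const) simp
  then have "is_poly_deg_le n m (\<lambda>a. 1 / fact m * (\<Prod>i<m. L a - of_nat i))"
    by (intro is_poly_deg_le_cmult) simp
  moreover have "1 / fact m * (\<Prod>i<m. L a - of_nat i) = L a gchoose m" for a
    using gbinomial_mult_fact'[of "L a" m] by (simp add: atLeast0LessThan field_simps)
  ultimately show ?thesis
    by simp
qed

lemma is_poly_deg_le_monomial:
  assumes "\<forall>i. m i \<noteq> 0 \<longrightarrow> i \<in> {1..n}" "(\<Sum>i=1..n. m i) \<le> D"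
  shows "is_poly_deg_le n D (monomial n m)"
  unfolding is_poly_deg_le_iff using assms
  by (intro exI[of _ "{m}"] exI[of _ "\<lambda>_. 1"]) auto

lemma monomial_upd_zero:
  assumes "i \<in> {1..n}"
  shows "monomial n m (a(i := 0)) = (if m i = 0 then monomial n m a else 0)"
  using assms unfolding monomial_def by (auto intro!: prod.cong prod_zero bexI[of _ i])

lemma monomial_expansion_if_vanishing:
  assumes "finite M" and f: "\<And>a. f a = (\<Sum>m\<in>M. c m * monomial n m a)"
    and vanish: "\<And>i a. i \<in> K \<Longrightarrow> a i = 0 \<Longrightarrow> f a = 0" and "finite K" "K \<subseteq> {1..n}"
  shows "f a = (\<Sum>m\<in>{m\<in>M. \<forall>i\<in>K. 0 < m i}. c m * monomial n m a)"
  using \<open>finite K\<close> \<open>K \<subseteq> {1..n}\<close> vanish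
proof (induction K arbitrary: a rule: finite_induct)
  case empty
  then show ?case by (simp add: f)
next
  case (insert x K)
  define M' where "M' = {m\<in>M. \<forall>i\<in>K. 0 < m i}"
  have x: "x \<in> {1..n}"
    using insert.prems by simp
  have IH: "f b = (\<Sum>m\<in>M'. c m * monomial n m b)" for b
    unfolding M'_def by (intro insert.IH) (use insert.prems in auto)
  have "f (a(x := 0)) = 0"
    by (rule insert.prems(2)[of x]) simp_all
  then have "f a = f a - f (a(x := 0))"
    by simp
  also have "\<dots> = (\<Sum>m\<in>M'. c m * monomial n m a - c m * monomial n m (a(x := 0)))"
    unfolding IH by (simp add: sum_subtractf)
  also have "\<dots> = (\<Sum>m\<in>M'. if 0 < m x then c m * monomial n m a else 0)"
    by (rule sum.cong) (auto simp: monomial_upd_zero[OF x])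
  also have "\<dots> = (\<Sum>m\<in>{m\<in>M'. 0 < m x}. c m * monomial n m a)"
    using \<open>finite M\<close> sum.inter_filter[of M' "\<lambda>m. c m * monomial n m a" "\<lambda>m. 0 < m x"]
    by (simp add: M'_def)
  also have "{m\<in>M'. 0 < m x} = {m\<in>M. \<forall>i\<in>insert x K. 0 < m i}"
    by (auto simp: M'_def)
  finally show ?case .
qed

lemma monomial_eq_prod_vars_mult:
  assumes "\<forall>i\<in>{1..n}. 0 < m i"
  shows "monomial n m a = (\<Prod>i=1..n. a i) * monomial n (\<lambda>i. m i - 1) a"
proof -
  have "a i ^ m i = a i * a i ^ (m i - 1)" if "i \<in> {1..n}" for i
    using bspec[OF assms that] by (simp add: power_eq_if)
  then have "monomial n m a = (\<Prod>i=1..n. a i * a i ^ (m i - 1))"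
    unfolding monomial_def by (rule prod.cong[OF refl])
  then show ?thesis
    unfolding monomial_def by (simp add: prod.distrib)
qed

lemma is_poly_deg_le_dvd_prod_vars:
  assumes "is_poly_deg_le n D f" and vanish: "\<And>i a. i \<in> {1..n} \<Longrightarrow> a i = 0 \<Longrightarrow> f a = 0"
  shows "\<exists>Q. is_poly_deg_le n (D - n) Q \<and> (\<forall>a. f a = (\<Prod>i=1..n. a i) * Q a)"
proof -
  obtain M c where M: "finite M" "\<forall>m\<in>M. (\<forall>i. m i \<noteq> 0 \<longrightarrow> i \<in> {1..n}) \<and> (\<Sum>i=1..n. m i) \<le> D"
    and f: "\<And>a. f a = (\<Sum>m\<in>M. c m * monomial n m a)"
    using assms(1) unfolding is_poly_deg_le_iff by blast
  define M' where "M' = {m\<in>M. \<forall>i\<in>{1..n}. 0 < m i}"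
  define Q where "Q a = (\<Sum>m\<in>M'. c m * monomial n (\<lambda>i. m i - 1) a)" for a
  have f': "f a = (\<Sum>m\<in>M'. c m * monomial n m a)" for a
    unfolding M'_def by (rule monomial_expansion_if_vanishing[OF M(1) f vanish]) auto
  have factor: "monomial n m a = (\<Prod>i=1..n. a i) * monomial n (\<lambda>i. m i - 1) a"
    if "m \<in> M'" for m a
    using that by (intro monomial_eq_prod_vars_mult) (simp add: M'_def)
  have "f a = (\<Prod>i=1..n. a i) * Q a" for a
    unfolding f' Q_def sum_distrib_left
    by (rule sum.cong[OF refl]) (metis factor mult.left_commute)
  moreover have "is_poly_deg_le n (D - n) Q"
    unfolding Q_def
  proof (rule is_poly_deg_le_sum, rule is_poly_deg_le_cmult, rule is_poly_deg_le_monomial)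
    fix m assume "m \<in> M'"
    then have "m \<in> M" and pos: "\<forall>i\<in>{1..n}. 0 < m i"
      unfolding M'_def by blast+
    then show "\<forall>i. m i - 1 \<noteq> 0 \<longrightarrow> i \<in> {1..n}"
      using M(2) by (metis zero_diff)
    have "(\<Sum>i=1..n. m i - 1) = (\<Sum>i=1..n. m i) - (\<Sum>i=1..n. 1)"
      by (rule sum_subtractf_nat) (simp add: pos Suc_le_eq)
    then show "(\<Sum>i=1..n. m i - 1) \<le> D - n"
      using M(2) \<open>m \<in> M\<close> by (simp add: diff_le_mono)
  qed
  ultimately show ?thesis
    by blast
qed

section \<open>Ordered set partitions and compositions\<close>

definition ordered_partitions :: "'a set \<Rightarrow> nat \<Rightarrow> 'a set list set" where
  "ordered_partitions U k = {Is. length Is = k \<and> distinct Is \<and> partition_on U (set Is)}"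

lemma ordered_partitions_iff_nth:
  "Is \<in> ordered_partitions U k \<longleftrightarrow> length Is = k \<and> (\<forall>I\<in>set Is. I \<noteq> {}) \<and>
     (\<forall>i<k. \<forall>j<k. i \<noteq> j \<longrightarrow> Is ! i \<inter> Is ! j = {}) \<and> \<Union>(set Is) = U"
proof -
  have "distinct Is \<and> disjoint (set Is) \<longleftrightarrow>
      (\<forall>i<length Is. \<forall>j<length Is. i \<noteq> j \<longrightarrow> Is ! i \<inter> Is ! j = {})"
    if "{} \<notin> set Is"
  proof
    assume "distinct Is \<and> disjoint (set Is)"
    then show "\<forall>i<length Is. \<forall>j<length Is. i \<noteq> j \<longrightarrow> Is ! i \<inter> Is ! j = {}"
      by (auto simp: disjoint_def nth_eq_iff_index_eq)
  next
    assume nth: "\<forall>i<length Is. \<forall>j<length Is. i \<noteq> j \<longrightarrow> Is ! i \<inter> Is ! j = {}"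
    have "distinct Is"
      unfolding distinct_conv_nth
    proof (intro allI impI)
      fix i j assume "i < length Is" "j < length Is" "i \<noteq> j"
      with nth that show "Is ! i \<noteq> Is ! j"
        by (metis Int_absorb nth_mem)
    qed
    moreover have "disjoint (set Is)"
    proof (rule disjointI)
      fix I J assume "I \<in> set Is" "J \<in> set Is" "I \<noteq> J"
      then obtain i j where "i < length Is" "j < length Is" "I = Is ! i" "J = Is ! j"
        by (auto simp: in_set_conv_nth)
      with nth \<open>I \<noteq> J\<close> show "I \<inter> J = {}"
        by blast
    qed
    ultimately show "distinct Is \<and> disjoint (set Is)" ..
  qed
  then show ?thesis
    unfolding ordered_partitions_def partition_on_def by (auto simp del: in_set_conv_nth)
qed

lemma ordered_set_partitions_eq: "ordered_set_partitions n k = ordered_partitions {1..n} k"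
  by (rule set_eqI) (simp add: ordered_set_partitions_def ordered_partitions_iff_nth)

lemma finite_ordered_partitions: "finite U \<Longrightarrow> finite (ordered_partitions U k)"
  by (rule finite_subset[of _ "{Is. set Is \<subseteq> Pow U \<and> length Is = k}"])
     (auto simp: ordered_partitions_def partition_on_def intro: finite_lists_length_eq)

lemma ordered_partitions_0: "U \<noteq> {} \<Longrightarrow> ordered_partitions U 0 = {}"
  by (auto simp: ordered_partitions_def partition_on_def)

lemma block_subset_if_ordered_partition: "Is \<in> ordered_partitions U k \<Longrightarrow> I \<in> set Is \<Longrightarrow> I \<subseteq> U"
  by (auto simp: ordered_partitions_def partition_on_def)

lemma sum_card_ordered_partition:
  assumes "Is \<in> ordered_partitions U k" "finite U"
  shows "(\<Sum>j<k. card (Is ! j)) = card U"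
proof -
  have Is: "length Is = k" "distinct Is" "partition_on U (set Is)"
    using assms(1) by (auto simp: ordered_partitions_def)
  have "(\<Sum>j<k. card (Is ! j)) = sum card (set Is)"
    using Is by (simp add: sum_list_sum_nth atLeast0LessThan sum_list_distinct_conv_sum_set[symmetric])
  also have "\<dots> = card U"
    using Is(3) assms(2) block_subset_if_ordered_partition[OF assms(1)]
    by (metis card_Union_disjoint finite_subset partition_onD1 partition_onD2)
  finally show ?thesis .
qed

lemma ordered_partitions_eq_empty_if_card_less:
  assumes "finite U" "card U < k"
  shows "ordered_partitions U k = {}"
proof (rule ccontr)
  assume "ordered_partitions U k \<noteq> {}"
  then obtain Is where Is: "Is \<in> ordered_partitions U k"
    by blast
  have "1 \<le> card (Is ! j)" if "j < k" for j
  proof -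
    have "Is ! j \<in> set Is"
      using Is that by (simp add: ordered_partitions_def)
    then show ?thesis
      using Is assms(1) block_subset_if_ordered_partition[OF Is]
      by (auto simp: ordered_partitions_def partition_on_def Suc_le_eq card_gt_0_iff
          intro: finite_subset)
  qed
  then have "(\<Sum>j<k. 1) \<le> (\<Sum>j<k. card (Is ! j))"
    by (intro sum_mono) simp
  with assms show False
    using sum_card_ordered_partition[OF Is assms(1)] by simp
qed

lemma insert_singleton_block_iff:
  assumes "p \<notin> U"
  shows "xs @ {p} # ys \<in> ordered_partitions (insert p U) (Suc k) \<longleftrightarrow>
    xs @ ys \<in> ordered_partitions U k"
proof -
  define P where "P = set (xs @ ys)"
  have set_eq: "set (xs @ {p} # ys) = insert {p} P" and U_eq: "insert p U - {p} = U"
    using assms by (auto simp: P_def)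
  show ?thesis
  proof
    assume L: "xs @ {p} # ys \<in> ordered_partitions (insert p U) (Suc k)"
    then have "length (xs @ ys) = k" "distinct (xs @ ys)" "{p} \<notin> P"
      by (simp_all add: ordered_partitions_def P_def)
    have part: "partition_on (insert p U) (insert {p} P)"
      using L unfolding ordered_partitions_def set_eq by (simp add: P_def)
    have "{p} \<inter> J = {}" if "J \<in> P" for J
      using partition_onD2[OF part] that \<open>{p} \<notin> P\<close> by (metis disjointD insertCI)
    then have "disjnt {p} (\<Union>P)"
      by (auto simp: disjnt_def)
    show "xs @ ys \<in> ordered_partitions U k"
      using partition_on_insert[OF \<open>disjnt {p} (\<Union>P)\<close>, of "insert p U"] part
        \<open>length (xs @ ys) = k\<close> \<open>distinct (xs @ ys)\<close>
      by (simp add: ordered_partitions_def U_eq P_def)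
  next
    assume "xs @ ys \<in> ordered_partitions U k"
    then have "length (xs @ ys) = k" "distinct (xs @ ys)" and part: "partition_on U P"
      by (simp_all add: ordered_partitions_def P_def)
    moreover have "disjnt {p} (\<Union>P)" "{p} \<notin> P"
      using partition_onD1[OF part] assms by (auto simp: disjnt_def)
    ultimately show "xs @ {p} # ys \<in> ordered_partitions (insert p U) (Suc k)"
      using partition_on_insert[of "{p}" P "insert p U"]
      by (simp add: ordered_partitions_def set_eq U_eq P_def)
  qed
qed

lemma take_Cons_drop_inject:
  assumes "x \<notin> set xs" "t \<le> length xs" "t' \<le> length ys"
    and eq: "take t xs @ x # drop t xs = take t' ys @ x # drop t' ys"
  shows "xs = ys \<and> t = t'"
proof -
  have "x \<notin> set (take t xs)" "x \<notin> set (drop t xs)"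
    using assms(1) by (auto dest: in_set_takeD in_set_dropD)
  then have "take t xs = take t' ys" "drop t xs = drop t' ys"
    using eq by (simp_all add: append_Cons_eq_iff)
  moreover from this(1) have "t = t'"
    using assms(2,3) by (metis length_take min.absorb2)
  ultimately show ?thesis
    by (metis append_take_drop_id)
qed

lemma bij_betw_insert_singleton_block:
  assumes "p \<notin> U"
  shows "bij_betw (\<lambda>(Js, t). take t Js @ {p} # drop t Js) (ordered_partitions U k \<times> {..k})
           {Is \<in> ordered_partitions (insert p U) (Suc k). {p} \<in> set Is}"
  unfolding bij_betw_def
proof (intro conjI subset_antisym subsetI)
  have no_p: "{p} \<notin> set Js" if "Js \<in> ordered_partitions U k" for Js
    using block_subset_if_ordered_partition[OF that] assms by blast
  show "inj_on (\<lambda>(Js, t). take t Js @ {p} # drop t Js) (ordered_partitions U k \<times> {..k})"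
  proof (rule inj_onI, clarify)
    fix Js t Js' t'
    assume "Js \<in> ordered_partitions U k" "t \<le> k" "Js' \<in> ordered_partitions U k" "t' \<le> k"
      and "take t Js @ {p} # drop t Js = take t' Js' @ {p} # drop t' Js'"
    then show "Js = Js' \<and> t = t'"
      using no_p by (intro take_Cons_drop_inject) (auto simp: ordered_partitions_def)
  qed
  fix Is
  show "Is \<in> {Is \<in> ordered_partitions (insert p U) (Suc k). {p} \<in> set Is}"
    if Is: "Is \<in> (\<lambda>(Js, t). take t Js @ {p} # drop t Js) ` (ordered_partitions U k \<times> {..k})"
  proof -
    obtain Js t where "Js \<in> ordered_partitions U k" and "Is = take t Js @ {p} # drop t Js"
      using Is by auto
    then show ?thesis
      using insert_singleton_block_iff[OF assms, of "take t Js" "drop t Js"] by simp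
  qed
  show "Is \<in> (\<lambda>(Js, t). take t Js @ {p} # drop t Js) ` (ordered_partitions U k \<times> {..k})"
    if Is: "Is \<in> {Is \<in> ordered_partitions (insert p U) (Suc k). {p} \<in> set Is}"
  proof -
    have "{p} \<in> set Is"
      using Is by simp
    then obtain xs ys where xs_ys: "Is = xs @ {p} # ys"
      by (blast dest: split_list)
    then have "xs @ ys \<in> ordered_partitions U k"
      using Is insert_singleton_block_iff[OF assms, of xs ys] by simp
    moreover have "length xs \<le> k"
      using calculation by (simp add: ordered_partitions_def)
    ultimately show ?thesis
      unfolding xs_ys by (intro image_eqI[of _ _ "(xs @ ys, length xs)"]) simp_all
  qed
qed

lemma partition_on_insert_into_block:
  assumes part: "partition_on U P" and "J \<in> P" "p \<notin> U"
  shows "partition_on (insert p U) (insert (insert p J) (P - {J}))"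
proof -
  have "J \<inter> I = {}" if "I \<in> P - {J}" for I
    using partition_onD2[OF part] \<open>J \<in> P\<close> that by (auto dest: disjointD)
  then have disj: "disjnt J (\<Union>(P - {J}))"
    by (auto simp: disjnt_def)
  then have "partition_on (U - J) (P - {J})"
    using partition_on_insert[OF disj, of U] part \<open>J \<in> P\<close> by (simp add: insert_absorb)
  moreover have "disjnt (insert p J) (\<Union>(P - {J}))"
    using disj partition_onD1[OF part] \<open>p \<notin> U\<close> by (auto simp: disjnt_def)
  moreover have "insert p U - insert p J = U - J" "J \<subseteq> U"
    using \<open>p \<notin> U\<close> partition_onD1[OF part] \<open>J \<in> P\<close> by auto
  ultimately show ?thesis
    using partition_on_insert[of "insert p J" "P - {J}" "insert p U"] by auto
qed

lemma ordered_partition_insert_into_block: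
  assumes Js: "Js \<in> ordered_partitions U k" and "j < k" "p \<notin> U"
  shows "Js[j := insert p (Js ! j)] \<in> ordered_partitions (insert p U) k"
    and "{p} \<notin> set (Js[j := insert p (Js ! j)])"
proof -
  have "length Js = k" "distinct Js" and part: "partition_on U (set Js)"
    using Js by (simp_all add: ordered_partitions_def)
  have p_notin: "p \<notin> I" if "I \<in> set Js" for I
    using block_subset_if_ordered_partition[OF Js that] \<open>p \<notin> U\<close> by blast
  have J: "Js ! j \<in> set Js"
    using \<open>length Js = k\<close> \<open>j < k\<close> by simp
  have set_eq: "set (Js[j := insert p (Js ! j)]) = insert (insert p (Js ! j)) (set Js - {Js ! j})"
    using \<open>distinct Js\<close> \<open>length Js = k\<close> \<open>j < k\<close> by (simp add: set_update_distinct)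
  have "distinct (Js[j := insert p (Js ! j)])"
    using p_notin \<open>distinct Js\<close> by (intro distinct_list_update) auto
  moreover have "partition_on (insert p U) (set (Js[j := insert p (Js ! j)]))"
    unfolding set_eq using partition_on_insert_into_block[OF part J \<open>p \<notin> U\<close>] .
  ultimately show "Js[j := insert p (Js ! j)] \<in> ordered_partitions (insert p U) k"
    using \<open>length Js = k\<close> by (simp add: ordered_partitions_def)
  have "Js ! j \<noteq> {}"
    using partition_onD3[OF part] J by auto
  then show "{p} \<notin> set (Js[j := insert p (Js ! j)])"
    using p_notin p_notin[OF J] unfolding set_eq by blast
qed

lemma ordered_partition_remove_point:
  assumes "Is \<in> ordered_partitions (insert p U) k" "{p} \<notin> set Is" "p \<notin> U"
  shows "map (\<lambda>I. I - {p}) Is \<in> ordered_partitions U k"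
proof -
  have "I - {p} \<noteq> {}" if "I \<in> set Is" for I
    using assms(1,2) that unfolding ordered_partitions_iff_nth
    by (metis Diff_eq_empty_iff subset_singletonD)
  moreover have "(Is ! i - {p}) \<inter> (Is ! j - {p}) = {}" if "i < k" "j < k" "i \<noteq> j" for i j
    using assms(1) that unfolding ordered_partitions_iff_nth by blast
  ultimately show ?thesis
    using assms unfolding ordered_partitions_iff_nth by auto
qed

lemma list_update_insert_inject:
  assumes "\<forall>I\<in>set Js. p \<notin> I" "\<forall>I\<in>set Js'. p \<notin> I" "j < length Js" "j' < length Js'"
    and eq: "Js[j := insert p (Js ! j)] = Js'[j' := insert p (Js' ! j')]"
  shows "Js = Js' \<and> j = j'"
proof -
  have remove_p: "map (\<lambda>I. I - {p}) (Xs[i := insert p (Xs ! i)]) = Xs"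
    if "\<forall>I\<in>set Xs. p \<notin> I" "i < length Xs" for Xs i
  proof -
    have "map (\<lambda>I. I - {p}) Xs = Xs"
      using that(1) by (intro map_idI) auto
    then show ?thesis
      using that by (simp add: map_update)
  qed
  have "Js = Js'"
    using remove_p[OF assms(1,3)] remove_p[OF assms(2,4)] eq by metis
  moreover have "j = j'"
  proof (rule ccontr)
    assume "j \<noteq> j'"
    have "p \<in> Js'[j' := insert p (Js' ! j')] ! j"
      using eq assms(3) by (metis insertI1 nth_list_update_eq)
    with \<open>j \<noteq> j'\<close> \<open>Js = Js'\<close> assms(1,3) show False
      by auto
  qed
  ultimately show ?thesis ..
qed

lemma bij_betw_insert_into_block:
  assumes "p \<notin> U"
  shows "bij_betw (\<lambda>(Js, j). Js[j := insert p (Js ! j)]) (ordered_partitions U k \<times> {..<k})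
           {Is \<in> ordered_partitions (insert p U) k. {p} \<notin> set Is}"
  unfolding bij_betw_def
proof (intro conjI subset_antisym subsetI)
  have p_notin: "\<forall>I\<in>set Js. p \<notin> I" if "Js \<in> ordered_partitions U k" for Js
    using block_subset_if_ordered_partition[OF that] assms by blast
  show "inj_on (\<lambda>(Js, j). Js[j := insert p (Js ! j)]) (ordered_partitions U k \<times> {..<k})"
  proof (rule inj_onI, clarify)
    fix Js j Js' j'
    assume "Js \<in> ordered_partitions U k" "j < k" "Js' \<in> ordered_partitions U k" "j' < k"
      and "Js[j := insert p (Js ! j)] = Js'[j' := insert p (Js' ! j')]"
    then show "Js = Js' \<and> j = j'"
      using p_notin by (intro list_update_insert_inject) (auto simp: ordered_partitions_def)
  qed
  fix Is
  show "Is \<in> {Is \<in> ordered_partitions (insert p U) k. {p} \<notin> set Is}"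
    if "Is \<in> (\<lambda>(Js, j). Js[j := insert p (Js ! j)]) ` (ordered_partitions U k \<times> {..<k})"
    using that ordered_partition_insert_into_block[OF _ _ assms] by auto
  show "Is \<in> (\<lambda>(Js, j). Js[j := insert p (Js ! j)]) ` (ordered_partitions U k \<times> {..<k})"
    if Is: "Is \<in> {Is \<in> ordered_partitions (insert p U) k. {p} \<notin> set Is}"
  proof -
    have len: "length Is = k" and disj: "\<forall>i<k. \<forall>j<k. i \<noteq> j \<longrightarrow> Is ! i \<inter> Is ! j = {}"
      and un: "\<Union>(set Is) = insert p U"
      using Is by (simp_all add: ordered_partitions_iff_nth)
    obtain j where j: "j < k" "p \<in> Is ! j"
      using un len by (metis UnionE in_set_conv_nth insertI1)
    have "Is = (map (\<lambda>I. I - {p}) Is)[j := insert p (map (\<lambda>I. I - {p}) Is ! j)]"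
    proof (rule nth_equalityI)
      fix i assume "i < length Is"
      then show "Is ! i = (map (\<lambda>I. I - {p}) Is)[j := insert p (map (\<lambda>I. I - {p}) Is ! j)] ! i"
        using j len disj by (cases "i = j") auto
    qed simp
    then show ?thesis
      using j ordered_partition_remove_point[OF _ _ assms] Is
      by (intro image_eqI[of _ _ "(map (\<lambda>I. I - {p}) Is, j)"]) simp_all
  qed
qed

lemma finite_compositions: "finite (compositions k s)"
  by (rule finite_subset[of _ "{ds. set ds \<subseteq> {..s} \<and> length ds = k}"])
     (auto simp: compositions_def member_le_sum_list intro: finite_lists_length_eq)

lemma sum_nth_composition: "ds \<in> compositions k s \<Longrightarrow> (\<Sum>j<k. ds ! j) = s"
  by (auto simp: compositions_def sum_list_sum_nth atLeast0LessThan)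

lemma bij_betw_insert_zero_compositions:
  assumes "t \<le> k"
  shows "bij_betw (\<lambda>ds. take t ds @ 0 # drop t ds) (compositions k s)
           {ds \<in> compositions (Suc k) s. ds ! t = 0}"
proof (rule bij_betw_byWitness[where f' = "\<lambda>ds. take t ds @ drop (Suc t) ds"])
  show "\<forall>ds\<in>compositions k s. take t (take t ds @ 0 # drop t ds) @
      drop (Suc t) (take t ds @ 0 # drop t ds) = ds"
    using assms by (auto simp: compositions_def)
  show "\<forall>ds\<in>{ds \<in> compositions (Suc k) s. ds ! t = 0}.
      take t (take t ds @ drop (Suc t) ds) @ 0 # drop t (take t ds @ drop (Suc t) ds) = ds"
  proof clarify
    fix ds assume ds: "ds \<in> compositions (Suc k) s" "ds ! t = 0"
    then have "take t ds @ 0 # drop (Suc t) ds = ds"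
      using assms id_take_nth_drop[of t ds] by (simp add: compositions_def)
    with ds assms show "take t (take t ds @ drop (Suc t) ds) @ 0 #
        drop t (take t ds @ drop (Suc t) ds) = ds"
      by (simp add: compositions_def min_def)
  qed
  show "(\<lambda>ds. take t ds @ 0 # drop t ds) ` compositions k s \<subseteq>
      {ds \<in> compositions (Suc k) s. ds ! t = 0}"
    using assms by (auto simp: compositions_def nth_append sum_list_append[symmetric])
  show "(\<lambda>ds. take t ds @ drop (Suc t) ds) ` {ds \<in> compositions (Suc k) s. ds ! t = 0} \<subseteq>
      compositions k s"
  proof clarify
    fix ds assume "ds \<in> compositions (Suc k) s" "ds ! t = 0"
    then show "take t ds @ drop (Suc t) ds \<in> compositions k s"
      using assms id_take_nth_drop[of t ds]
      by (auto simp: compositions_def) (metis add_0 sum_list.Cons sum_list_append)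
  qed
qed

section \<open>The summands of \<open>P\<^sub>g\<^sub>,\<^sub>n\<close>\<close>

definition block_weight :: "(nat \<Rightarrow> rat) \<Rightarrow> nat set \<Rightarrow> nat \<Rightarrow> rat" where
  "block_weight a I d = ((2 * (\<Sum>l\<in>I. a l) + 1) gchoose (2 * d)) *
      (\<Prod>i=1..card I - 1. 2 * of_nat d + 1 - 2 * of_nat i)"

definition partition_weight :: "(nat \<Rightarrow> rat) \<Rightarrow> nat \<Rightarrow> nat set list \<Rightarrow> rat" where
  "partition_weight a s Is =
     (\<Sum>ds\<in>compositions (length Is) s. \<Prod>j<length Is. block_weight a (Is ! j) (ds ! j))"

lemma Pgn_eq_sum_partition_weight:
  "Pgn g n a = (\<Sum>k=1..n. (-1) ^ k * fact (2 * g - 3 + k) / fact k *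
     (\<Sum>Is\<in>ordered_partitions {1..n} k. partition_weight a (g - 2 + n) Is))"
proof -
  have "partition_weight a s Is =
      (\<Sum>ds\<in>compositions k s. \<Prod>j<k. block_weight a (Is ! j) (ds ! j))"
    if "Is \<in> ordered_partitions {1..n} k" for Is k s
    using that by (simp add: ordered_partitions_def partition_weight_def)
  then show ?thesis
    unfolding Pgn_def ordered_set_partitions_eq block_weight_def by simp
qed

lemma is_poly_deg_le_block_weight:
  assumes "I \<subseteq> {1..n}"
  shows "is_poly_deg_le n (2 * d) (\<lambda>a. block_weight a I d)"
proof -
  have "is_poly_deg_le n 1 (\<lambda>a. (\<Sum>l\<in>I. 2 * a l) + 1)"
    using assms by (intro is_poly_deg_le_add is_poly_deg_le_sum is_poly_deg_le_cmult
        is_poly_deg_le_var is_poly_deg_le_const) auto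
  then have "is_poly_deg_le n (2 * d + 0) (\<lambda>a. (((\<Sum>l\<in>I. 2 * a l) + 1) gchoose (2 * d)) *
      (\<Prod>i=1..card I - 1. 2 * of_nat d + 1 - 2 * of_nat i))"
    by (intro is_poly_deg_le_mult is_poly_deg_le_gchoose is_poly_deg_le_const)
  then show ?thesis
    by (simp add: block_weight_def sum_distrib_left)
qed

lemma is_poly_deg_le_partition_weight:
  assumes "\<forall>I\<in>set Is. I \<subseteq> {1..n}"
  shows "is_poly_deg_le n (2 * s) (\<lambda>a. partition_weight a s Is)"
  unfolding partition_weight_def
proof (rule is_poly_deg_le_sum)
  fix ds assume ds: "ds \<in> compositions (length Is) s"
  have "is_poly_deg_le n (\<Sum>j<length Is. 2 * ds ! j)
      (\<lambda>a. \<Prod>j<length Is. block_weight a (Is ! j) (ds ! j))"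
    using assms by (intro is_poly_deg_le_prod is_poly_deg_le_block_weight) auto
  then show "is_poly_deg_le n (2 * s) (\<lambda>a. \<Prod>j<length Is. block_weight a (Is ! j) (ds ! j))"
    using sum_nth_composition[OF ds] by (simp add: sum_distrib_left[symmetric])
qed

lemma is_poly_deg_le_Pgn: "is_poly_deg_le n (2 * (g - 2 + n)) (Pgn g n)"
proof -
  have "is_poly_deg_le n (2 * (g - 2 + n)) (\<lambda>a. \<Sum>k=1..n. (-1) ^ k * fact (2 * g - 3 + k) / fact k *
     (\<Sum>Is\<in>ordered_partitions {1..n} k. partition_weight a (g - 2 + n) Is))"
    by (intro is_poly_deg_le_sum is_poly_deg_le_cmult is_poly_deg_le_partition_weight)
      (auto dest: block_subset_if_ordered_partition)
  then show ?thesis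
    by (simp add: Pgn_eq_sum_partition_weight[abs_def])
qed

section \<open>Vanishing on the coordinate hyperplanes\<close>

lemma block_weight_singleton: "a p = 0 \<Longrightarrow> block_weight a {p} d = (if d = 0 then 1 else 0)"
  using binomial_gbinomial[of 1 "2 * d", where 'a = rat]
  by (cases d) (simp_all add: block_weight_def)

lemma block_weight_insert:
  assumes "p \<notin> J" "finite J" "J \<noteq> {}" "a p = 0"
  shows "block_weight a (insert p J) d =
    block_weight a J d * (2 * of_nat d + 1 - 2 * of_nat (card J))"
proof -
  obtain m where "card J = Suc m"
    using assms by (cases "card J") auto
  then show ?thesis
    using assms by (simp add: block_weight_def)
qed

lemma prod_lessThan_eq_prod_list_map2:
  "length xs = length ys \<Longrightarrow> (\<Prod>j<length xs. f (xs ! j) (ys ! j)) = prod_list (map2 f xs ys)"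
proof (induction xs arbitrary: ys)
  case (Cons x xs)
  then obtain y ys' where "ys = y # ys'"
    by (cases ys) auto
  with Cons show ?case
    by (simp del: prod.lessThan_Suc add: prod.lessThan_Suc_shift)
qed simp

lemma partition_weight_insert_singleton:
  assumes "a p = 0"
  shows "partition_weight a s (xs @ {p} # ys) = partition_weight a s (xs @ ys)"
proof -
  define t where "t = length xs"
  define k where "k = length (xs @ ys)"
  define G where "G ds = prod_list (map2 (block_weight a) (xs @ {p} # ys) ds)" for ds
  have weight: "partition_weight a s Is =
      (\<Sum>ds\<in>compositions (length Is) s. prod_list (map2 (block_weight a) Is ds))" for Is
    unfolding partition_weight_def
    by (intro sum.cong refl prod_lessThan_eq_prod_list_map2) (simp add: compositions_def)
  have G_split: "G (us @ d # vs) =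
      block_weight a {p} d * prod_list (map2 (block_weight a) (xs @ ys) (us @ vs))"
    if "length us = t" for us d vs
    using that by (simp add: G_def t_def)
  have "partition_weight a s (xs @ {p} # ys) = (\<Sum>ds\<in>compositions (Suc k) s. G ds)"
    by (simp add: weight G_def k_def)
  also have "\<dots> = (\<Sum>ds\<in>{ds \<in> compositions (Suc k) s. ds ! t = 0}. G ds)"
  proof (rule sum.mono_neutral_right[OF finite_compositions])
    show "\<forall>ds\<in>compositions (Suc k) s - {ds \<in> compositions (Suc k) s. ds ! t = 0}. G ds = 0"
    proof
      fix ds assume "ds \<in> compositions (Suc k) s - {ds \<in> compositions (Suc k) s. ds ! t = 0}"
      then have ds: "ds ! t \<noteq> 0" and "t < length ds"
        by (auto simp: compositions_def k_def t_def)
      then have "G ds = G (take t ds @ ds ! t # drop (Suc t) ds)"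
        by (simp flip: id_take_nth_drop)
      also have "\<dots> = 0"
        using ds \<open>t < length ds\<close> by (simp add: G_split block_weight_singleton[of a p, OF assms])
      finally show "G ds = 0" .
    qed
  qed auto
  also have "\<dots> = (\<Sum>ds\<in>compositions k s. G (take t ds @ 0 # drop t ds))"
    by (rule sum.reindex_bij_betw[OF bij_betw_insert_zero_compositions, symmetric])
      (simp add: t_def k_def)
  also have "\<dots> = partition_weight a s (xs @ ys)"
    unfolding weight[of "xs @ ys"] k_def by (intro sum.cong refl)
      (auto simp: t_def G_split block_weight_singleton[of a p, OF assms] compositions_def)
  finally show ?thesis .
qed

lemma prod_block_weight_insert_into_block:
  assumes "j < length Js" "p \<notin> Js ! j" "finite (Js ! j)" "Js ! j \<noteq> {}" "a p = 0"
  shows "(\<Prod>i<length Js. block_weight a (Js[j := insert p (Js ! j)] ! i) (ds ! i)) =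
    (\<Prod>i<length Js. block_weight a (Js ! i) (ds ! i)) *
    (2 * of_nat (ds ! j) + 1 - 2 * of_nat (card (Js ! j)))"
proof -
  let ?rest = "\<Prod>i\<in>{..<length Js} - {j}. block_weight a (Js ! i) (ds ! i)"
  have "(\<Prod>i<length Js. block_weight a (Js[j := insert p (Js ! j)] ! i) (ds ! i)) =
      block_weight a (insert p (Js ! j)) (ds ! j) * ?rest"
    using assms(1) by (subst prod.remove[of _ j]) (auto intro!: prod.cong)
  moreover have "(\<Prod>i<length Js. block_weight a (Js ! i) (ds ! i)) =
      block_weight a (Js ! j) (ds ! j) * ?rest"
    using assms(1) by (subst prod.remove[of _ j]) auto
  ultimately show ?thesis
    using block_weight_insert[of p "Js ! j" a, OF assms(2-5)] by simp
qed

lemma sum_partition_weight_insert_into_block: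
  assumes Js: "Js \<in> ordered_partitions U k" and "finite U" "p \<notin> U" "a p = 0"
  shows "(\<Sum>j<k. partition_weight a s (Js[j := insert p (Js ! j)])) =
    (2 * of_nat s + of_nat k - 2 * of_nat (card U)) * partition_weight a s Js"
proof -
  have len: "length Js = k"
    using Js by (simp add: ordered_partitions_def)
  define P where "P ds = (\<Prod>i<k. block_weight a (Js ! i) (ds ! i))" for ds
  define factor where
    "factor j ds = (2 * of_nat (ds ! j) + 1 - 2 * of_nat (card (Js ! j)) :: rat)" for j ds
  have insert_p: "(\<Prod>i<k. block_weight a (Js[j := insert p (Js ! j)] ! i) (ds ! i)) =
      P ds * factor j ds" if "j < k" for j ds
  proof -
    have J: "Js ! j \<in> set Js"
      using len that by simp
    have "p \<notin> Js ! j" "finite (Js ! j)" "Js ! j \<noteq> {}"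
      using block_subset_if_ordered_partition[OF Js J] \<open>finite U\<close> \<open>p \<notin> U\<close> Js J
      by (auto simp: ordered_partitions_def partition_on_def intro: finite_subset)
    then show ?thesis
      using prod_block_weight_insert_into_block[of j Js p a ds] that len \<open>a p = 0\<close>
      by (simp add: P_def factor_def)
  qed
  have sum_factor: "(\<Sum>j<k. factor j ds) = 2 * of_nat s + of_nat k - 2 * of_nat (card U)"
    if "ds \<in> compositions k s" for ds
    using sum_nth_composition[OF that] sum_card_ordered_partition[OF Js \<open>finite U\<close>]
    unfolding factor_def
    by (simp add: sum.distrib sum_subtractf flip: sum_distrib_left of_nat_sum)
  have "(\<Sum>j<k. partition_weight a s (Js[j := insert p (Js ! j)])) =
      (\<Sum>j<k. \<Sum>ds\<in>compositions k s. P ds * factor j ds)"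
    unfolding partition_weight_def length_list_update len
    by (intro sum.cong refl) (simp add: insert_p)
  also have "\<dots> = (\<Sum>ds\<in>compositions k s. P ds * (\<Sum>j<k. factor j ds))"
    by (subst sum.swap) (simp add: sum_distrib_left)
  also have "\<dots> = (\<Sum>ds\<in>compositions k s. (2 * of_nat s + of_nat k - 2 * of_nat (card U)) * P ds)"
    by (intro sum.cong refl) (simp add: sum_factor)
  also have "\<dots> = (2 * of_nat s + of_nat k - 2 * of_nat (card U)) * partition_weight a s Js"
    by (simp add: partition_weight_def P_def len sum_distrib_left)
  finally show ?thesis .
qed

lemma sum_partition_weight_insert_point:
  assumes "finite U" "p \<notin> U" "a p = 0"
  shows "(\<Sum>Is\<in>ordered_partitions (insert p U) (Suc k). partition_weight a s Is) =
    of_nat (Suc k) * (\<Sum>Js\<in>ordered_partitions U k. partition_weight a s Js) +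
    (2 * of_nat s + of_nat (Suc k) - 2 * of_nat (card U)) *
      (\<Sum>Js\<in>ordered_partitions U (Suc k). partition_weight a s Js)"
proof -
  let ?W = "partition_weight a s"
  have fin: "finite (ordered_partitions (insert p U) (Suc k))"
    using assms(1) by (simp add: finite_ordered_partitions)
  have "(\<Sum>Is\<in>ordered_partitions (insert p U) (Suc k). ?W Is) =
      (\<Sum>Is\<in>{Is \<in> ordered_partitions (insert p U) (Suc k). {p} \<in> set Is}. ?W Is) +
      (\<Sum>Is\<in>{Is \<in> ordered_partitions (insert p U) (Suc k). {p} \<notin> set Is}. ?W Is)"
    using sum.Int_Diff[OF fin, of ?W "{Is. {p} \<in> set Is}"] by (simp add: Int_def set_diff_eq)
  also have "(\<Sum>Is\<in>{Is \<in> ordered_partitions (insert p U) (Suc k). {p} \<in> set Is}. ?W Is) =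
      (\<Sum>(Js, t)\<in>ordered_partitions U k \<times> {..k}. ?W (take t Js @ {p} # drop t Js))"
    using sum.reindex_bij_betw[OF bij_betw_insert_singleton_block[OF assms(2)], of ?W]
    by (simp add: case_prod_unfold)
  also have "\<dots> = of_nat (Suc k) * (\<Sum>Js\<in>ordered_partitions U k. ?W Js)"
    by (simp add: sum.cartesian_product[symmetric] sum_distrib_left
        partition_weight_insert_singleton[of a p, OF assms(3)])
  also have "(\<Sum>Is\<in>{Is \<in> ordered_partitions (insert p U) (Suc k). {p} \<notin> set Is}. ?W Is) =
      (\<Sum>(Js, j)\<in>ordered_partitions U (Suc k) \<times> {..<Suc k}. ?W (Js[j := insert p (Js ! j)]))"
    using sum.reindex_bij_betw[OF bij_betw_insert_into_block[OF assms(2)], of ?W]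
    by (simp add: case_prod_unfold)
  also have "\<dots> = (2 * of_nat s + of_nat (Suc k) - 2 * of_nat (card U)) *
      (\<Sum>Js\<in>ordered_partitions U (Suc k). ?W Js)"
    unfolding sum.cartesian_product[symmetric] sum_distrib_left
    by (intro sum.cong refl sum_partition_weight_insert_into_block assms)
  finally show ?thesis .
qed

lemma signed_fact_ratio_Suc_mult:
  "(-1) ^ Suc j * fact (m + Suc j) / fact (Suc j) * of_nat (Suc j) =
    - ((-1) ^ j * fact (Suc m + j) / fact j :: rat)"
proof -
  have "fact (Suc j) = (of_nat (Suc j) * fact j :: rat)"
    by (rule fact_Suc)
  then show ?thesis
    by (simp del: fact_Suc of_nat_Suc add: field_simps)
qed

lemma signed_fact_ratio_mult:
  "(-1) ^ k * fact (m + k) / fact k * of_nat (Suc m + k) =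
    ((-1) ^ k * fact (Suc m + k) / fact k :: rat)"
proof -
  have "fact (Suc m + k) = (of_nat (Suc m + k) * fact (m + k) :: rat)"
    by (metis add_Suc fact_Suc)
  then show ?thesis
    by (simp del: fact_Suc of_nat_Suc add_Suc add: field_simps)
qed

lemma sum_partition_weight_insert_point_telescoping:
  fixes U :: "nat set" and a :: "nat \<Rightarrow> rat" and m s :: nat
  defines "T \<equiv> \<lambda>k. \<Sum>Js\<in>ordered_partitions U k. partition_weight a s Js"
    and "D \<equiv> \<lambda>k. ((-1) ^ k * fact (Suc m + k) / fact k :: rat)"
  assumes hyps: "finite U" "p \<notin> U" "a p = 0" and s_eq: "2 * s = Suc m + 2 * card U"
  shows "(-1) ^ Suc j * fact (m + Suc j) / fact (Suc j) *
      (\<Sum>Is\<in>ordered_partitions (insert p U) (Suc j). partition_weight a s Is) =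
    D (Suc j) * T (Suc j) - D j * T j"
proof -
  define c where "c = ((-1) ^ Suc j * fact (m + Suc j) / fact (Suc j) :: rat)"
  have "2 * of_nat s + of_nat (Suc j) - 2 * of_nat (card U) = (of_nat (Suc m + Suc j) :: rat)"
    using arg_cong[OF s_eq, of "of_nat :: nat \<Rightarrow> rat"] by simp
  then have "(\<Sum>Is\<in>ordered_partitions (insert p U) (Suc j). partition_weight a s Is) =
      of_nat (Suc j) * T j + of_nat (Suc m + Suc j) * T (Suc j)"
    unfolding T_def by (simp add: sum_partition_weight_insert_point[of U p a, OF hyps])
  moreover have "c * of_nat (Suc j) = - D j" "c * of_nat (Suc m + Suc j) = D (Suc j)"
    unfolding c_def D_def by (rule signed_fact_ratio_Suc_mult, rule signed_fact_ratio_mult)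
  ultimately show ?thesis
    unfolding c_def[symmetric] by (simp add: distrib_left flip: mult.assoc)
qed

lemma Pgn_eq_0_if_var_eq_0:
  assumes "g \<ge> 2" "n \<ge> 2" "p \<in> {1..n}" "a p = 0"
  shows "Pgn g n a = 0"
proof -
  define U where "U = {1..n} - {p}"
  define s where "s = g - 2 + n"
  define m where "m = 2 * g - 3"
  define T where "T k = (\<Sum>Js\<in>ordered_partitions U k. partition_weight a s Js)" for k
  define D where "D k = ((-1) ^ k * fact (Suc m + k) / fact k :: rat)" for k
  have U: "finite U" "p \<notin> U" "insert p U = {1..n}" "card U = n - 1"
    using assms(3) by (auto simp: U_def)
  have "Pgn g n a = (\<Sum>k=1..n. (-1) ^ k * fact (m + k) / fact k *
      (\<Sum>Is\<in>ordered_partitions (insert p U) k. partition_weight a s Is))"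
    unfolding Pgn_eq_sum_partition_weight U(3) s_def m_def ..
  also have "\<dots> = (\<Sum>k=1..n. D k * T k - D (k - 1) * T (k - 1))"
  proof (intro sum.cong refl)
    fix k assume "k \<in> {1..n}"
    moreover have "2 * s = Suc m + 2 * card U"
      using assms(1,2) U(4) by (simp add: s_def m_def)
    ultimately show "(-1) ^ k * fact (m + k) / fact k *
        (\<Sum>Is\<in>ordered_partitions (insert p U) k. partition_weight a s Is) =
        D k * T k - D (k - 1) * T (k - 1)"
      using sum_partition_weight_insert_point_telescoping[of U p a, OF U(1,2) assms(4)]
      unfolding T_def D_def by (cases k) auto
  qed
  also have "\<dots> = D n * T n - D 0 * T 0"
    using sum_telescope''[of 0 n "\<lambda>k. D k * T k"] by simp
  also have "\<dots> = 0"
  proof -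
    have "U \<noteq> {}"
      using U(4) assms(2) by auto
    then show ?thesis
      using U(1,4) assms(2)
      by (simp add: T_def ordered_partitions_0 ordered_partitions_eq_empty_if_card_less)
  qed
  finally show ?thesis .
qed

theorem corollary5p4:
  fixes g n :: nat
  assumes "g \<ge> 2" and "n \<ge> 2"
  shows "\<exists>Q. is_poly_deg_le n (2 * g - 4 + n) Q \<and>
             (\<forall>a. Pgn g n a = (\<Prod>i=1..n. a i) * Q a)"
proof -
  have "\<exists>Q. is_poly_deg_le n (2 * (g - 2 + n) - n) Q \<and>
      (\<forall>a. Pgn g n a = (\<Prod>i=1..n. a i) * Q a)"
    by (rule is_poly_deg_le_dvd_prod_vars[OF is_poly_deg_le_Pgn])
      (rule Pgn_eq_0_if_var_eq_0[OF assms])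
  moreover have "2 * (g - 2 + n) - n = 2 * g - 4 + n"
    using assms by simp
  ultimately show ?thesis
    by (simp only:)
qed

end
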